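(* Let $X$ be a shift space over $\mathcal{A}$, let $\sigma:\mathcal{A}^*\to\mathcal{B}^*$ be an injective and strongly left proper morphism with first letter $\ell$, let $Y$ be the image of $X$ under $\sigma$ and let $u$ be a non-empty word in $\mathcal{L}(Y)$. If $\ell$ does not occur in $u$, then there exists $b\in\mathcal{A}$ such that $u$ is a non-prefix factor of $\sigma(b)$. Otherwise, there is a unique triple $(s,v,p)\in\mathcal{B}^*\times\mathcal{L}(X)\times\mathcal{B}^*$ for which there exists a pair $(a,b)\in E_X(v)$ such that $u=s\sigma(v)p$, $s$ is a proper suffix of $\sigma(a)$ and $p$ is a non-empty prefix of $\sigma(b)$. Moreover, in the case where $\ell$ occurs in $u$, $$E_Y(u)=\{(a',b')\in\mathcal{B}\times\mathcal{B}\mid \exists (a,b)\in E_X(v):\ \sigma(a)\in\mathcal{B}^*a's\ \wedge\ \sigma(b)\ell\in pb'\mathcal{B}^*\}.$$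
   Context: A shift space over a finite alphabet $\mathcal{A}$ is a closed shift-invariant $X\subseteq\mathcal{A}^{\mathbb{Z}}$ in which all letters of $\mathcal{A}$ occur; $\mathcal{L}(X)$ is its set of finite factors (including the empty word). For $w\in\mathcal{L}(X)$, $E_X(w)=\{(a,b)\in\mathcal{A}\times\mathcal{A}: awb\in\mathcal{L}(X)\}$. A morphism $\sigma:\mathcal{A}^*\to\mathcal{B}^*$ is a non-erasing monoid morphism; it is strongly left proper with first letter $\ell\in\mathcal{B}$ if for every $a\in\mathcal{A}$, $\sigma(a)$ starts with $\ell$ and $\ell$ occurs exactly once in $\sigma(a)$. The image of $X$ under $\sigma$ is $Y=\{S^k\sigma(x): x\in X, 0\le k<|\sigma(x_0)|\}$ where $S$ is the shift map and $\sigma$ is extended to bi-infinite words by concatenation (with $\sigma(x_0)$ starting at index $0$). *)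

theory Defs
  imports Main "HOL-Library.Sublist"
begin

definition shift :: "(int \<Rightarrow> 'a) \<Rightarrow> (int \<Rightarrow> 'a)" where
  "shift x = (\<lambda>i. x (i + 1))"

text \<open>Closedness in the product of discrete topologies: every point all of whose
  central windows agree with some point of X belongs to X.\<close>
definition closed_shift :: "(int \<Rightarrow> 'a) set \<Rightarrow> bool" where
  "closed_shift X \<longleftrightarrow>
     (\<forall>x. (\<forall>n::nat. \<exists>y\<in>X. \<forall>i. \<bar>i\<bar> \<le> int n \<longrightarrow> y i = x i) \<longrightarrow> x \<in> X)"

definition shift_space :: "(int \<Rightarrow> 'a::finite) set \<Rightarrow> bool" where
  "shift_space X \<longleftrightarrow> closed_shift X \<and> shift ` X = X \<and>
     (\<forall>a. \<exists>x\<in>X. \<exists>i. x i = a)"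

definition factor_at :: "(int \<Rightarrow> 'a) \<Rightarrow> int \<Rightarrow> nat \<Rightarrow> 'a list" where
  "factor_at x i n = map (\<lambda>k. x (i + int k)) [0..<n]"

definition lang :: "(int \<Rightarrow> 'a) set \<Rightarrow> 'a list set" where
  "lang X = {w. \<exists>x\<in>X. \<exists>i. w = factor_at x i (length w)}"

definition ext_set :: "(int \<Rightarrow> 'a) set \<Rightarrow> 'a list \<Rightarrow> ('a \<times> 'a) set" where
  "ext_set X w = {(a, b). a # w @ [b] \<in> lang X}"

definition morph :: "('a \<Rightarrow> 'b list) \<Rightarrow> 'a list \<Rightarrow> 'b list" where
  "morph \<sigma> w = concat (map \<sigma> w)"

definition non_erasing :: "('a \<Rightarrow> 'b list) \<Rightarrow> bool" where
  "non_erasing \<sigma> \<longleftrightarrow> (\<forall>a. \<sigma> a \<noteq> [])"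

definition injective_morphism :: "('a \<Rightarrow> 'b list) \<Rightarrow> bool" where
  "injective_morphism \<sigma> \<longleftrightarrow> inj (morph \<sigma>)"

definition strongly_left_proper :: "('a \<Rightarrow> 'b list) \<Rightarrow> 'b \<Rightarrow> bool" where
  "strongly_left_proper \<sigma> l \<longleftrightarrow>
     (\<forall>a. \<sigma> a \<noteq> [] \<and> hd (\<sigma> a) = l \<and> count_list (\<sigma> a) l = 1)"

text \<open>Starting position of sigma(x_n) in sigma(x), with sigma(x_0) starting at 0.\<close>
definition start_pos :: "('a \<Rightarrow> 'b list) \<Rightarrow> (int \<Rightarrow> 'a) \<Rightarrow> int \<Rightarrow> int" where
  "start_pos \<sigma> x n =
     (if 0 \<le> n then (\<Sum>k\<in>{0..<n}. int (length (\<sigma> (x k))))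
      else - (\<Sum>k\<in>{n..<0}. int (length (\<sigma> (x k)))))"

definition is_bi_image :: "('a \<Rightarrow> 'b list) \<Rightarrow> (int \<Rightarrow> 'a) \<Rightarrow> (int \<Rightarrow> 'b) \<Rightarrow> bool" where
  "is_bi_image \<sigma> x y \<longleftrightarrow>
     (\<forall>n. \<forall>k < length (\<sigma> (x n)). y (start_pos \<sigma> x n + int k) = \<sigma> (x n) ! k)"

definition image_shift :: "('a \<Rightarrow> 'b list) \<Rightarrow> (int \<Rightarrow> 'a) set \<Rightarrow> (int \<Rightarrow> 'b) set" where
  "image_shift \<sigma> X = {(shift ^^ k) y | x y k. x \<in> X \<and> is_bi_image \<sigma> x y \<and>
                          k < length (\<sigma> (x 0))}"

end

theory Submission
  imports Defs
begin

text \<open>Since l occurs in every \<sigma>(a) exactly once, as its first letter, the occurrences of l in an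
  image y = \<sigma>(x) are exactly the positions where the blocks \<sigma>(x_n) start. A factor u of y
  without l therefore lies inside a single block, away from its start. If u contains l, cutting u at
  the block starts it contains gives u = s \<sigma>(v) p, where s is a proper suffix of \<sigma>(a), p is a
  non-empty prefix of \<sigma>(b), and a v b is a factor of x. Here s is the part of u before its first l
  and p the part from its last l on, so both are determined by u, and then v is determined by
  injectivity of \<sigma>. The letter extending u to the left in y is the one preceding s in its block;
  the letter extending u to the right follows p in its block, or is the l starting the next one.\<close>

definition segment :: "(int \<Rightarrow> 'a) \<Rightarrow> int \<Rightarrow> int \<Rightarrow> 'a list" where
  "segment y i j = factor_at y i (nat (j - i))"

lemma length_factor_at [simp]: "length (factor_at y i n) = n"
  by (simp add: factor_at_def)

lemma length_segment [simp]: "length (segment y i j) = nat (j - i)"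
  by (simp add: segment_def factor_at_def)

lemma nth_segment [simp]: "k < nat (j - i) \<Longrightarrow> segment y i j ! k = y (i + int k)"
  by (simp add: segment_def factor_at_def)

lemma factor_at_eq_segment: "factor_at y i n = segment y i (i + int n)"
  by (simp add: segment_def)

lemma segment_empty [simp]: "segment y i i = []"
  by (simp add: segment_def factor_at_def)

lemma segment_singleton [simp]: "segment y i (i + 1) = [y i]"
  by (simp add: segment_def factor_at_def)

lemma set_segment: "set (segment y i j) = y ` {i..<j}"
proof -
  have "{i..<j} = (\<lambda>k. i + int k) ` {0..<nat (j - i)}"
    by (auto simp: image_iff intro!: bexI[of _ "nat (_ - i)"])
  then show ?thesis by (simp add: segment_def factor_at_def image_image)
qed

lemma segment_append:
  assumes "i \<le> j" "j \<le> k"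
  shows "segment y i j @ segment y j k = segment y i k"
  using assms by (intro nth_equalityI) (auto simp: nth_append add.commute)

lemma segment_Cons: "i < j \<Longrightarrow> segment y i j = y i # segment y (i + 1) j"
  using segment_append[of i "i + 1" j y] by simp

lemma segment_snoc: "i \<le> j \<Longrightarrow> segment y i (j + 1) = segment y i j @ [y j]"
  using segment_append[of i j "j + 1" y] by simp

lemma shift_pow: "(shift ^^ k) y = (\<lambda>t. y (t + int k))"
  by (induction k) (auto simp: shift_def add.commute add.left_commute)

lemma segment_in_lang: "x \<in> X \<Longrightarrow> segment x i j \<in> lang X"
  unfolding lang_def segment_def by force

lemma lang_sublist_closed:
  assumes "sublist w' w" "w \<in> lang X"
  shows "w' \<in> lang X"
proof -
  obtain ps ss where w: "w = ps @ w' @ ss"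
    using assms(1) by (auto simp: sublist_def)
  obtain x i where "x \<in> X" and x: "w = factor_at x i (length w)"
    using assms(2) by (auto simp: lang_def)
  have "w' = factor_at x (i + int (length ps)) (length w')"
  proof (rule nth_equalityI)
    fix k assume k: "k < length w'"
    have "w' ! k = w ! (length ps + k)"
      using k by (simp add: w nth_append)
    also have "\<dots> = x (i + int (length ps) + int k)"
      using k by (subst x) (simp add: w factor_at_def add.assoc)
    finally show "w' ! k = factor_at x (i + int (length ps)) (length w') ! k"
      using k by (simp add: factor_at_def)
  qed simp
  then show ?thesis
    using \<open>x \<in> X\<close> by (auto simp: lang_def)
qed

lemma ext_set_segment:
  assumes "x \<in> X" "n < m"
  shows "(x n, x m) \<in> ext_set X (segment x (n + 1) m)"
proof -
  have "segment x n (m + 1) = x n # segment x (n + 1) (m + 1)"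
    using assms(2) by (simp add: segment_Cons)
  also have "\<dots> = x n # segment x (n + 1) m @ [x m]"
    using assms(2) by (simp add: segment_snoc)
  finally show ?thesis
    using segment_in_lang[OF assms(1), of n "m + 1"] by (simp add: ext_set_def)
qed

lemma start_pos_add1: "start_pos \<sigma> x (n + 1) = start_pos \<sigma> x n + int (length (\<sigma> (x n)))"
proof -
  consider "0 \<le> n" | "n = -1" | "n < -1" by linarith
  then show ?thesis
  proof cases
    case 1
    then have "{0..<n + 1} = insert n {0..<n}" by auto
    with 1 show ?thesis by (simp add: start_pos_def)
  next
    case 2
    then have "{n..<0} = {n}" by auto
    with 2 show ?thesis by (simp add: start_pos_def)
  next
    case 3
    then have "{n..<0} = insert n {n + 1..<0}" by auto
    with 3 show ?thesis by (simp add: start_pos_def)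
  qed
qed

lemma strict_mono_start_pos:
  assumes "non_erasing \<sigma>"
  shows "strict_mono (start_pos \<sigma> x)"
proof (rule strict_monoI)
  have succ: "start_pos \<sigma> x n < start_pos \<sigma> x (n + 1)" for n
    using assms by (simp add: start_pos_add1 non_erasing_def)
  fix n m :: int
  assume "n < m"
  then show "start_pos \<sigma> x n < start_pos \<sigma> x m"
  proof (induction m rule: int_gr_induct)
    case base
    show ?case by (rule succ)
  next
    case (step m)
    then show ?case using succ[of m] by linarith
  qed
qed

lemma strict_mono_int_cover:
  fixes f :: "int \<Rightarrow> int"
  assumes "strict_mono f"
  shows "\<exists>n. f n \<le> t \<and> t < f (n + 1)"
proof (induction t rule: int_induct[where k = "f 0"])
  case base
  show ?case using strict_monoD[OF assms, of 0 1] by auto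
next
  case (step1 t)
  then obtain n where "f n \<le> t" "t < f (n + 1)" by blast
  show ?case
  proof (cases "t + 1 < f (n + 1)")
    case True
    with \<open>f n \<le> t\<close> show ?thesis by (intro exI[of _ n]) simp
  next
    case False
    with \<open>t < f (n + 1)\<close> have "f (n + 1) = t + 1" by simp
    moreover have "f (n + 1) < f (n + 1 + 1)" using assms by (simp add: strict_mono_less)
    ultimately show ?thesis by (intro exI[of _ "n + 1"]) simp
  qed
next
  case (step2 t)
  then obtain n where "f n \<le> t" "t < f (n + 1)" by blast
  show ?case
  proof (cases "f n \<le> t - 1")
    case True
    with \<open>t < f (n + 1)\<close> show ?thesis by auto
  next
    case False
    with \<open>f n \<le> t\<close> have "f n = t" by simp
    moreover have "f (n - 1) < f n" using assms by (simp add: strict_mono_less)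
    ultimately show ?thesis by (intro exI[of _ "n - 1"]) simp
  qed
qed

lemma bi_image_exists:
  assumes "non_erasing \<sigma>"
  shows "\<exists>y. is_bi_image \<sigma> x y"
proof -
  let ?start = "start_pos \<sigma> x"
  have mono: "strict_mono ?start"
    using assms by (rule strict_mono_start_pos)
  define block where "block t = (SOME n. ?start n \<le> t \<and> t < ?start (n + 1))" for t
  have block: "block t = n" if "?start n \<le> t" "t < ?start (n + 1)" for n t
  proof -
    have "?start (block t) \<le> t \<and> t < ?start (block t + 1)"
      unfolding block_def by (rule someI[of _ n]) (use that in simp)
    then have "block t < n + 1" "n < block t + 1"
      using that strict_mono_less[OF mono] by (metis le_less_trans)+
    then show ?thesis by linarith
  qed
  define y where "y t = \<sigma> (x (block t)) ! nat (t - ?start (block t))" for t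
  have "is_bi_image \<sigma> x y"
    unfolding is_bi_image_def
  proof (intro allI impI)
    fix n k
    assume "k < length (\<sigma> (x n))"
    then have "block (?start n + int k) = n"
      by (intro block) (auto simp: start_pos_add1)
    then show "y (?start n + int k) = \<sigma> (x n) ! k"
      by (simp add: y_def)
  qed
  then show ?thesis by blast
qed

lemma bi_image_in_image_shift:
  assumes "non_erasing \<sigma>" "x \<in> X" "is_bi_image \<sigma> x y"
  shows "y \<in> image_shift \<sigma> X"
  using assms unfolding image_shift_def non_erasing_def
  by (intro CollectI exI[of _ x] exI[of _ y] exI[of _ 0]) auto

lemma lang_image_shiftE:
  assumes "w \<in> lang (image_shift \<sigma> X)"
  obtains x y i j where "x \<in> X" "is_bi_image \<sigma> x y" "w = segment y i j" "int (length w) = j - i"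
proof -
  obtain y' i where "y' \<in> image_shift \<sigma> X" and w: "w = factor_at y' i (length w)"
    using assms unfolding lang_def by blast
  then obtain x y k where "x \<in> X" "is_bi_image \<sigma> x y" "y' = (shift ^^ k) y"
    unfolding image_shift_def by blast
  moreover from w \<open>y' = (shift ^^ k) y\<close> have "w = factor_at y (i + int k) (length w)"
    by (simp add: shift_pow factor_at_def algebra_simps)
  ultimately show ?thesis
    using that[of x y "i + int k" "i + int k + int (length w)"] by (simp add: factor_at_eq_segment)
qed

locale bi_image =
  fixes \<sigma> :: "'a \<Rightarrow> 'b list" and x :: "int \<Rightarrow> 'a" and y :: "int \<Rightarrow> 'b"
  assumes non_erasing: "non_erasing \<sigma>" and image: "is_bi_image \<sigma> x y"
begin

abbreviation start :: "int \<Rightarrow> int" where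
  "start \<equiv> start_pos \<sigma> x"

lemma start_less_iff [simp]: "start n < start m \<longleftrightarrow> n < m"
  using strict_mono_less[OF strict_mono_start_pos[OF non_erasing]] .

lemma start_le_iff [simp]: "start n \<le> start m \<longleftrightarrow> n \<le> m"
  using strict_mono_less_eq[OF strict_mono_start_pos[OF non_erasing]] .

lemma block_cover: "\<exists>n. start n \<le> t \<and> t < start (n + 1)"
  using strict_mono_int_cover[OF strict_mono_start_pos[OF non_erasing]] .

lemma segment_block: "segment y (start n) (start (n + 1)) = \<sigma> (x n)"
  using image by (intro nth_equalityI) (auto simp: is_bi_image_def start_pos_add1)

lemma block_split:
  assumes "start n \<le> t" "t \<le> start (n + 1)"
  shows "\<sigma> (x n) = segment y (start n) t @ segment y t (start (n + 1))"
  using assms by (simp add: segment_append segment_block)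

lemma segment_morph:
  assumes "n \<le> m"
  shows "segment y (start n) (start m) = morph \<sigma> (segment x n m)"
  using assms
proof (induction m rule: int_ge_induct)
  case base
  show ?case by (simp add: morph_def)
next
  case (step m)
  have "segment y (start n) (start (m + 1))
      = segment y (start n) (start m) @ segment y (start m) (start (m + 1))"
    using step.hyps by (simp add: segment_append)
  also have "\<dots> = morph \<sigma> (segment x n m) @ \<sigma> (x m)"
    by (simp add: step.IH segment_block)
  also have "\<dots> = morph \<sigma> (segment x n (m + 1))"
    using step.hyps by (simp add: segment_snoc morph_def)
  finally show ?case .
qed

end

definition cutting :: "('a \<Rightarrow> 'b list) \<Rightarrow> 'b list \<Rightarrow> 'b list \<Rightarrow> 'a list \<Rightarrow> 'b list \<Rightarrow> 'a \<Rightarrow> 'a \<Rightarrow> bool"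
  where "cutting \<sigma> u s v p a b \<longleftrightarrow>
    u = s @ morph \<sigma> v @ p \<and> strict_suffix s (\<sigma> a) \<and> p \<noteq> [] \<and> prefix p (\<sigma> b)"

lemma strongly_left_properE:
  assumes "strongly_left_proper \<sigma> l"
  obtains r where "\<sigma> a = l # r" "l \<notin> set r"
  using assms unfolding strongly_left_proper_def
  by (metis count_list.simps(2) count_list_0_iff hd_Cons_tl add_right_cancel add_0)

lemma takeWhile_neq_append_Cons: "x \<notin> set xs \<Longrightarrow> takeWhile (\<lambda>c. c \<noteq> x) (xs @ x # ys) = xs"
  by (induction xs) auto

lemma cutting_first_last_l:
  assumes "strongly_left_proper \<sigma> l" "cutting \<sigma> u s v p a b"
  obtains r q where "u = s @ l # r" "l \<notin> set s" "p = l # q" "l \<notin> set q"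
proof -
  have u: "u = s @ morph \<sigma> v @ p" and s: "strict_suffix s (\<sigma> a)"
    and p: "p \<noteq> []" "prefix p (\<sigma> b)"
    using assms(2) by (simp_all add: cutting_def)
  obtain ra where "\<sigma> a = l # ra" "l \<notin> set ra"
    using assms(1) by (rule strongly_left_properE)
  with s have "l \<notin> set s"
    by (auto simp: strict_suffix_def suffix_def Cons_eq_append_conv)
  obtain rb where "\<sigma> b = l # rb" "l \<notin> set rb"
    using assms(1) by (rule strongly_left_properE)
  with p obtain q where q: "p = l # q" "l \<notin> set q"
    by (auto simp: prefix_Cons dest: set_mono_prefix)
  have "\<exists>r. morph \<sigma> v @ p = l # r"
  proof (cases v)
    case (Cons c v')
    obtain rc where "\<sigma> c = l # rc"
      using assms(1) by (rule strongly_left_properE)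
    with Cons show ?thesis by (simp add: morph_def)
  qed (simp add: morph_def q)
  with u \<open>l \<notin> set s\<close> q show ?thesis
    using that by auto
qed

lemma cutting_unique:
  assumes "injective_morphism \<sigma>" "strongly_left_proper \<sigma> l"
    and "cutting \<sigma> u s v p a b" "cutting \<sigma> u s' v' p' a' b'"
  shows "s' = s \<and> v' = v \<and> p' = p"
proof -
  obtain r q where u: "u = s @ l # r" "l \<notin> set s" and p: "p = l # q" "l \<notin> set q"
    using assms(2,3) by (rule cutting_first_last_l)
  obtain r' q' where u': "u = s' @ l # r'" "l \<notin> set s'" and p': "p' = l # q'" "l \<notin> set q'"
    using assms(2,4) by (rule cutting_first_last_l)
  have "s' = s"
    using u u' by (metis takeWhile_neq_append_Cons)
  have "rev u = rev q @ l # rev (s @ morph \<sigma> v)"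
    using assms(3) p(1) by (simp add: cutting_def)
  moreover have "rev u = rev q' @ l # rev (s' @ morph \<sigma> v')"
    using assms(4) p'(1) by (simp add: cutting_def)
  ultimately have "rev q' = rev q"
    using p(2) p'(2) by (metis set_rev takeWhile_neq_append_Cons)
  with p p' have "p' = p"
    by simp
  with assms(3,4) \<open>s' = s\<close> have "morph \<sigma> v' = morph \<sigma> v"
    by (simp add: cutting_def)
  with assms(1) \<open>s' = s\<close> \<open>p' = p\<close> show ?thesis
    by (simp add: injective_morphism_def inj_eq)
qed

locale proper_bi_image = bi_image +
  fixes l :: 'b
  assumes strongly_left_proper: "strongly_left_proper \<sigma> l"
begin

lemma y_eq_l_iff: "y t = l \<longleftrightarrow> t \<in> range start"
proof -
  have block_head: "y (start n) = l" "l \<notin> y ` {start n + 1..<start (n + 1)}" for n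
  proof -
    obtain r where "\<sigma> (x n) = l # r" "l \<notin> set r"
      using strongly_left_proper by (rule strongly_left_properE)
    moreover have "\<sigma> (x n) = y (start n) # segment y (start n + 1) (start (n + 1))"
      by (simp add: segment_Cons flip: segment_block)
    ultimately have "y (start n) = l" "l \<notin> set (segment y (start n + 1) (start (n + 1)))"
      by simp_all
    then show "y (start n) = l" "l \<notin> y ` {start n + 1..<start (n + 1)}"
      by (simp_all add: set_segment)
  qed
  obtain n where "start n \<le> t" "t < start (n + 1)"
    using block_cover by blast
  then have "t = start n \<or> t \<in> {start n + 1..<start (n + 1)}"
    by auto
  show ?thesis
  proof
    assume "y t = l"
    with \<open>t = start n \<or> _\<close> block_head(2)[of n] have "t = start n"
      by blast
    then show "t \<in> range start" by simp
  next
    assume "t \<in> range start"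
    then show "y t = l" using block_head(1) by auto
  qed
qed

lemma l_in_segment_iff: "l \<in> set (segment y i j) \<longleftrightarrow> (\<exists>n. i \<le> start n \<and> start n < j)"
proof -
  have "l \<in> set (segment y i j) \<longleftrightarrow> (\<exists>t. i \<le> t \<and> t < j \<and> y t = l)"
    by (auto simp: set_segment)
  also have "\<dots> \<longleftrightarrow> (\<exists>n. i \<le> start n \<and> start n < j)"
    by (auto simp: y_eq_l_iff)
  finally show ?thesis .
qed

lemma segment_inside_block:
  assumes "i < j" "l \<notin> set (segment y i j)"
  obtains n s p where "s \<noteq> []" "\<sigma> (x n) = s @ segment y i j @ p"
proof -
  obtain n where n: "start n \<le> i" "i < start (n + 1)"
    using block_cover by blast
  have "start n < i" "j \<le> start (n + 1)"
    using assms n l_in_segment_iff by (auto simp: order.order_iff_strict not_le)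
  then have "\<sigma> (x n) = segment y (start n) i @ segment y i j @ segment y j (start (n + 1))"
    using assms(1) n block_split[of n i] segment_append[of i j "start (n + 1)" y] by simp
  moreover have "segment y (start n) i \<noteq> []"
    using \<open>start n < i\<close> by (simp flip: length_greater_0_conv)
  ultimately show ?thesis
    using that by blast
qed

lemma segment_cutting:
  assumes "l \<in> set (segment y i j)"
  obtains n m s p where "n < m" "cutting \<sigma> (segment y i j) s (segment x (n + 1) m) p (x n) (x m)"
    "\<exists>w. \<sigma> (x n) = w @ [y (i - 1)] @ s" "\<exists>w. \<sigma> (x m) @ [l] = p @ [y j] @ w"
proof -
  obtain k where k: "i \<le> start k" "start k < j"
    using assms l_in_segment_iff by blast
  obtain n where n: "start n \<le> i - 1" "i - 1 < start (n + 1)"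
    using block_cover by blast
  obtain m where m: "start m \<le> j - 1" "j - 1 < start (m + 1)"
    using block_cover by blast
  \<comment> \<open>then start (n + 1) and start m are the first and the last block start in [i, j)\<close>
  have "start n < start k" "start k < start (m + 1)"
    using k n m by linarith+
  then have "n < m" by simp
  define s where "s = segment y i (start (n + 1))"
  define p where "p = segment y (start m) j"
  have "i \<le> start (n + 1)" "start (n + 1) \<le> start m" "start m \<le> j" "start (n + 1) \<le> j"
    using n m \<open>n < m\<close> start_le_iff[of "n + 1" m] by linarith+
  then have "segment y i j = s @ segment y (start (n + 1)) (start m) @ p"
    unfolding s_def p_def by (simp add: segment_append)
  also have "segment y (start (n + 1)) (start m) = morph \<sigma> (segment x (n + 1) m)"
    using \<open>n < m\<close> by (simp add: segment_morph)
  finally have u: "segment y i j = s @ morph \<sigma> (segment x (n + 1) m) @ p" .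
  have a: "\<sigma> (x n) = segment y (start n) (i - 1) @ [y (i - 1)] @ s"
    using n block_split[of n "i - 1"] by (simp add: s_def segment_Cons)
  have "\<sigma> (x m) @ [l] = segment y (start m) (start (m + 1) + 1)"
    using y_eq_l_iff[of "start (m + 1)"] by (simp add: segment_snoc segment_block)
  also have "\<dots> = p @ [y j] @ segment y (j + 1) (start (m + 1) + 1)"
    using m segment_append[of "start m" j "start (m + 1) + 1" y] segment_Cons[of j "start (m + 1) + 1" y]
    by (simp add: p_def)
  finally have b: "\<sigma> (x m) @ [l] = p @ [y j] @ segment y (j + 1) (start (m + 1) + 1)" .
  have "strict_suffix s (\<sigma> (x n))"
    using a by (auto simp: strict_suffix_def suffix_def)
  moreover have "p \<noteq> []" "prefix p (\<sigma> (x m))"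
    using m block_split[of m j] by (auto simp: p_def prefix_def simp flip: length_greater_0_conv)
  ultimately have "cutting \<sigma> (segment y i j) s (segment x (n + 1) m) p (x n) (x m)"
    using u by (simp add: cutting_def)
  with \<open>n < m\<close> a b show ?thesis
    using that by blast
qed

end

lemma ext_set_image_shift_subset:
  assumes "non_erasing \<sigma>" "injective_morphism \<sigma>" "strongly_left_proper \<sigma> l"
    and "cutting \<sigma> u s v p a b" "(a', b') \<in> ext_set (image_shift \<sigma> X) u"
  shows "\<exists>(a, b) \<in> ext_set X v. (\<exists>w. \<sigma> a = w @ [a'] @ s) \<and> (\<exists>w. \<sigma> b @ [l] = p @ [b'] @ w)"
proof -
  obtain r where "u = s @ l # r"
    using assms(3,4) by (rule cutting_first_last_l)
  then have "l \<in> set u" by simp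
  have "a' # u @ [b'] \<in> lang (image_shift \<sigma> X)"
    using assms(5) by (simp add: ext_set_def)
  then obtain x y i k where "x \<in> X" "is_bi_image \<sigma> x y"
    and w: "a' # u @ [b'] = segment y i k" and len: "int (length (a' # u @ [b'])) = k - i"
    by (rule lang_image_shiftE)
  interpret proper_bi_image \<sigma> x y l
    using assms(1,3) \<open>is_bi_image \<sigma> x y\<close> by unfold_locales
  define j where "j = i + 1 + int (length u)"
  have "segment y i k = segment y i (j + 1)"
    using len unfolding j_def by (intro arg_cong[where f = "segment y i"]) simp
  also have "\<dots> = y i # segment y (i + 1) (j + 1)"
    by (rule segment_Cons) (simp add: j_def)
  also have "\<dots> = y i # segment y (i + 1) j @ [y j]"
    by (subst segment_snoc) (simp_all add: j_def)
  finally have "segment y i k = y i # segment y (i + 1) j @ [y j]" .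
  with w have "a' = y i" "u = segment y (i + 1) j" "b' = y j"
    by simp_all
  with \<open>l \<in> set u\<close> obtain n m s' p'
    where "n < m" "cutting \<sigma> u s' (segment x (n + 1) m) p' (x n) (x m)"
      "\<exists>w. \<sigma> (x n) = w @ [a'] @ s'" "\<exists>w. \<sigma> (x m) @ [l] = p' @ [b'] @ w"
    using segment_cutting by (metis add_diff_cancel_right')
  moreover have "s' = s" "segment x (n + 1) m = v" "p' = p"
    using cutting_unique[OF assms(2,3,4)] calculation(2) by simp_all
  ultimately show ?thesis
    using ext_set_segment[OF \<open>x \<in> X\<close>] by fastforce
qed

lemma ext_set_image_shift_supset:
  assumes "non_erasing \<sigma>" "strongly_left_proper \<sigma> l" "(a, b) \<in> ext_set X v"
    and "\<sigma> a = wa @ [a'] @ s" "\<sigma> b @ [l] = p @ [b'] @ wb" "u = s @ morph \<sigma> v @ p"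
  shows "(a', b') \<in> ext_set (image_shift \<sigma> X) u"
proof -
  have "a # v @ [b] \<in> lang X"
    using assms(3) by (simp add: ext_set_def)
  then obtain x i where "x \<in> X" and "a # v @ [b] = segment x i (i + int (length (a # v @ [b])))"
    by (auto simp: lang_def factor_at_eq_segment)
  obtain y where "is_bi_image \<sigma> x y"
    using bi_image_exists[OF assms(1)] by blast
  interpret proper_bi_image \<sigma> x y l
    using assms(1,2) \<open>is_bi_image \<sigma> x y\<close> by unfold_locales
  define k where "k = i + int (length (a # v @ [b]))"
  have avb: "a # v @ [b] = segment x i k"
    unfolding k_def by fact
  have "segment y (start i) (start k + 1) = morph \<sigma> (segment x i k) @ [y (start k)]"
    by (simp add: k_def segment_snoc segment_morph)
  also have "\<dots> = \<sigma> a @ morph \<sigma> v @ \<sigma> b @ [l]"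
    using y_eq_l_iff[of "start k"] by (simp add: morph_def flip: avb)
  also have "\<dots> = wa @ (a' # u @ [b']) @ wb"
    using assms(4-6) by simp
  finally have "sublist (a' # u @ [b']) (segment y (start i) (start k + 1))"
    by (metis sublist_appendI)
  moreover have "segment y (start i) (start k + 1) \<in> lang (image_shift \<sigma> X)"
    using bi_image_in_image_shift[OF assms(1) \<open>x \<in> X\<close> image] by (rule segment_in_lang)
  ultimately show ?thesis
    by (simp add: ext_set_def lang_sublist_closed)
qed

lemma image_factor_inside_block:
  assumes "non_erasing \<sigma>" "strongly_left_proper \<sigma> l"
    and "u \<in> lang (image_shift \<sigma> X)" "u \<noteq> []" "l \<notin> set u"
  shows "\<exists>b s p. s \<noteq> [] \<and> \<sigma> b = s @ u @ p"
proof -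
  obtain x y i j where "x \<in> X" "is_bi_image \<sigma> x y" and u: "u = segment y i j"
    and len: "int (length u) = j - i"
    using assms(3) by (rule lang_image_shiftE)
  interpret proper_bi_image \<sigma> x y l
    using assms(1,2) \<open>is_bi_image \<sigma> x y\<close> by unfold_locales
  have "0 < length u"
    using assms(4) by simp
  with len have "i < j" by linarith
  then obtain n s p where "s \<noteq> []" "\<sigma> (x n) = s @ segment y i j @ p"
    using assms(5)[unfolded u] by (rule segment_inside_block)
  then show ?thesis
    unfolding u by blast
qed

lemma image_factor_cutting_exists:
  assumes "non_erasing \<sigma>" "strongly_left_proper \<sigma> l"
    and "u \<in> lang (image_shift \<sigma> X)" "l \<in> set u"
  obtains s v p a b where "v \<in> lang X" "(a, b) \<in> ext_set X v" "cutting \<sigma> u s v p a b"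
proof -
  obtain x y i j where "x \<in> X" "is_bi_image \<sigma> x y" and u: "u = segment y i j"
    using assms(3) by (rule lang_image_shiftE)
  interpret proper_bi_image \<sigma> x y l
    using assms(1,2) \<open>is_bi_image \<sigma> x y\<close> by unfold_locales
  obtain n m s p where "n < m" and "cutting \<sigma> (segment y i j) s (segment x (n + 1) m) p (x n) (x m)"
    using assms(4)[unfolded u] by (rule segment_cutting)
  then show ?thesis
    using that[of "segment x (n + 1) m" "x n" "x m" s p] segment_in_lang[OF \<open>x \<in> X\<close>]
      ext_set_segment[OF \<open>x \<in> X\<close> \<open>n < m\<close>]
    by (simp flip: u)
qed

lemma image_factor_unique_cutting:
  assumes "non_erasing \<sigma>" "injective_morphism \<sigma>" "strongly_left_proper \<sigma> l"
    and "u \<in> lang (image_shift \<sigma> X)" "l \<in> set u"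
  shows "\<exists>s v p. (v \<in> lang X \<and> (\<exists>(a, b) \<in> ext_set X v. cutting \<sigma> u s v p a b))
    \<and> (\<forall>s' v' p'. (v' \<in> lang X \<and> (\<exists>(a, b) \<in> ext_set X v'. cutting \<sigma> u s' v' p' a b))
         \<longrightarrow> (s', v', p') = (s, v, p))
    \<and> ext_set (image_shift \<sigma> X) u =
        {(a', b'). \<exists>(a, b) \<in> ext_set X v. (\<exists>w. \<sigma> a = w @ [a'] @ s) \<and> (\<exists>w. \<sigma> b @ [l] = p @ [b'] @ w)}"
proof -
  obtain s v p a b where "v \<in> lang X" "(a, b) \<in> ext_set X v" and cut: "cutting \<sigma> u s v p a b"
    using assms(1,3,4,5) by (rule image_factor_cutting_exists)
  have "(a', b') \<in> ext_set (image_shift \<sigma> X) u \<longleftrightarrow>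
      (\<exists>(a, b) \<in> ext_set X v. (\<exists>w. \<sigma> a = w @ [a'] @ s) \<and> (\<exists>w. \<sigma> b @ [l] = p @ [b'] @ w))" for a' b'
    using ext_set_image_shift_subset[OF assms(1-3) cut] ext_set_image_shift_supset[OF assms(1,3)] cut
    by (auto simp: cutting_def)
  then have "ext_set (image_shift \<sigma> X) u =
      {(a', b'). \<exists>(a, b) \<in> ext_set X v. (\<exists>w. \<sigma> a = w @ [a'] @ s) \<and> (\<exists>w. \<sigma> b @ [l] = p @ [b'] @ w)}"
    unfolding set_eq_iff split_paired_All by simp
  moreover have "(s', v', p') = (s, v, p)"
    if "v' \<in> lang X \<and> (\<exists>(a, b) \<in> ext_set X v'. cutting \<sigma> u s' v' p' a b)" for s' v' p'
    using that cutting_unique[OF assms(2,3) cut] by auto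
  ultimately show ?thesis
    using \<open>v \<in> lang X\<close> \<open>(a, b) \<in> ext_set X v\<close> cut by blast
qed

theorem proposition4p1:
  fixes X :: "(int \<Rightarrow> 'a::finite) set"
    and \<sigma> :: "'a \<Rightarrow> 'b::finite list"
    and l :: 'b
    and u :: "'b list"
  assumes "shift_space X"
    and "non_erasing \<sigma>"
    and "injective_morphism \<sigma>"
    and "strongly_left_proper \<sigma> l"
    and "u \<noteq> []"
    and "u \<in> lang (image_shift \<sigma> X)"
  shows "(l \<notin> set u \<longrightarrow> (\<exists>b. \<exists>s p. s \<noteq> [] \<and> \<sigma> b = s @ u @ p))
       \<and> (l \<in> set u \<longrightarrow>
           (\<exists>s v p.
              (v \<in> lang X \<and> (\<exists>(a, b) \<in> ext_set X v.
                  u = s @ morph \<sigma> v @ p \<and> strict_suffix s (\<sigma> a) \<and>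
                  p \<noteq> [] \<and> prefix p (\<sigma> b)))
            \<and> (\<forall>s' v' p'. (v' \<in> lang X \<and> (\<exists>(a, b) \<in> ext_set X v'.
                  u = s' @ morph \<sigma> v' @ p' \<and> strict_suffix s' (\<sigma> a) \<and>
                  p' \<noteq> [] \<and> prefix p' (\<sigma> b))) \<longrightarrow> (s', v', p') = (s, v, p))
            \<and> ext_set (image_shift \<sigma> X) u =
                {(a', b'). \<exists>(a, b) \<in> ext_set X v.
                    (\<exists>w. \<sigma> a = w @ [a'] @ s) \<and> (\<exists>w. \<sigma> b @ [l] = p @ [b'] @ w)}))"
  using image_factor_inside_block[OF assms(2,4,6,5)] image_factor_unique_cutting[OF assms(2,3,4,6)]
  unfolding cutting_def by blast

end
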